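(* Let $k,s,b_1,b_2\in\mathbb{R}$ and $\eta>0$. If there is a constant $C$ such that $$\|uv\|_{X^{k,-1/2+\eta}_{per}}\le C\|u\|_{X^{k,b_1}_{per}}\|v\|_{H^{b_2}_tH^s_x}$$ for all (smooth, rapidly decaying in $t$) functions $u,v$ on $\mathbb{T}_x\times\mathbb{R}_t$, then $s\ge0$ and $k<s+1$.
   Context: $\widehat f(n,\tau)$ is the Fourier transform (Fourier coefficients in $x\in\mathbb{T}$, Fourier transform in $t$); $\langle x\rangle=1+|x|$. $\|f\|_{X^{s,b}_{per}}=\big(\sum_{n\in\mathbb{Z}}\int\langle n\rangle^{2s}\langle\tau+n^2\rangle^{2b}|\widehat f(n,\tau)|^2d\tau\big)^{1/2}$, $\|f\|_{H^b_tH^s_x}=\big(\sum_n\int\langle n\rangle^{2s}\langle\tau\rangle^{2b}|\widehat f(n,\tau)|^2d\tau\big)^{1/2}$. (The paper's exponent $-1/2+$ is interpreted as $-1/2+\eta$.) *)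

theory Defs
  imports "HOL-Analysis.Analysis"
begin

text \<open>Functions on \<open>T_x \<times> R_t\<close> with \<open>T = R / 2\<pi>Z\<close> are represented as
  \<open>f :: real \<times> real \<Rightarrow> complex\<close>, \<open>f (x, t)\<close>, 2\<pi>-periodic in \<open>x\<close>.\<close>

definition jbr :: "real \<Rightarrow> real" where
  "jbr x = 1 + \<bar>x\<bar>"

definition partial :: "nat \<Rightarrow> (real \<times> real \<Rightarrow> complex) \<Rightarrow> (real \<times> real \<Rightarrow> complex)" where
  "partial d g = (\<lambda>(x, t). if d = 0 then vector_derivative (\<lambda>y. g (y, t)) (at x)
                            else vector_derivative (\<lambda>s. g (x, s)) (at t))"

fun pd :: "nat list \<Rightarrow> (real \<times> real \<Rightarrow> complex) \<Rightarrow> (real \<times> real \<Rightarrow> complex)" where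
  "pd [] f = f"
| "pd (d # ds) f = partial d (pd ds f)"

definition smooth2 :: "(real \<times> real \<Rightarrow> complex) \<Rightarrow> bool" where
  "smooth2 f \<longleftrightarrow> (\<forall>ds. continuous_on UNIV (pd ds f) \<and>
      (\<forall>x t. (\<lambda>y. pd ds f (y, t)) differentiable (at x) \<and>
             (\<lambda>s. pd ds f (x, s)) differentiable (at t)))"

definition test_fun :: "(real \<times> real \<Rightarrow> complex) \<Rightarrow> bool" where
  "test_fun f \<longleftrightarrow> smooth2 f \<and> (\<forall>x t. f (x + 2 * pi, t) = f (x, t)) \<and>
     (\<forall>ds (N::nat). \<exists>C. \<forall>x t. (1 + \<bar>t\<bar>) ^ N * norm (pd ds f (x, t)) \<le> C)"

definition FT :: "(real \<times> real \<Rightarrow> complex) \<Rightarrow> int \<Rightarrow> real \<Rightarrow> complex" where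
  "FT f n \<tau> = (LINT x:{0..2*pi}|lborel. (LINT t|lborel. f (x, t) * cis (- (real_of_int n * x + \<tau> * t))))"

definition ennsqrt :: "ennreal \<Rightarrow> ennreal" where
  "ennsqrt q = (if q = \<infinity> then \<infinity> else ennreal (sqrt (enn2real q)))"

definition Xper_norm :: "real \<Rightarrow> real \<Rightarrow> (real \<times> real \<Rightarrow> complex) \<Rightarrow> ennreal" where
  "Xper_norm s b f = ennsqrt (\<integral>\<^sup>+ n. (\<integral>\<^sup>+ \<tau>. ennreal (jbr (real_of_int n) powr (2 * s)
        * jbr (\<tau> + (real_of_int n)\<^sup>2) powr (2 * b) * (cmod (FT f n \<tau>))\<^sup>2) \<partial>lborel) \<partial>count_space UNIV)"

definition HH_norm :: "real \<Rightarrow> real \<Rightarrow> (real \<times> real \<Rightarrow> complex) \<Rightarrow> ennreal" where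
  "HH_norm b s f = ennsqrt (\<integral>\<^sup>+ n. (\<integral>\<^sup>+ \<tau>. ennreal (jbr (real_of_int n) powr (2 * s)
        * jbr \<tau> powr (2 * b) * (cmod (FT f n \<tau>))\<^sup>2) \<partial>lborel) \<partial>count_space UNIV)"

end

theory Submission
  imports Defs "HOL-Probability.Probability"
begin

text \<open>
  Test the estimate on Gaussian wave packets e^(inx) e^(iat - rt^2). Such a packet lives on the
  single spatial mode n, with a Gaussian in \<tau> centred at a, so all norms are explicit:
  <n>^(2s) times a Gaussian average of <\<tau> + \<omega>(n)>^(2b), where \<omega>(n) = n^2 for X^(s,b) and
  \<omega> = 0 for H^b H^s. A product of packets is again a packet: modes, modulations and widths add.

  If u sits on the paraboloid at mode n (a = -n^2) and v at mode -2n, then uv sits on the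
  paraboloid at mode -n; the factors <n>^k cancel and what remains is 1 <~ <2n>^s, so s \<ge> 0.
  If u is a Gaussian at mode 0 and v one at mode n with a = 0, then uv lies at distance n^2 from
  the paraboloid, giving <n>^k <n>^(2b) <~ <n>^s, i.e. k + 2b \<le> s, which is k < s + 1 for
  b = -1/2 + \<eta>.
\<close>

lemma jbr_ge_1: "jbr x \<ge> 1"
  by (simp add: jbr_def)

lemma jbr_pos: "jbr x > 0"
  by (simp add: jbr_def)

lemma jbr_uminus [simp]: "jbr (- x) = jbr x"
  by (simp add: jbr_def)

lemma borel_measurable_jbr [measurable]: "jbr \<in> borel_measurable borel"
  unfolding jbr_def by measurable

lemma jbr_add_le: "jbr (x + y) \<le> jbr x * jbr y"
proof -
  have "\<bar>x + y\<bar> \<le> \<bar>x\<bar> + \<bar>y\<bar> + \<bar>x\<bar> * \<bar>y\<bar>"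
    using abs_triangle_ineq[of x y] by (simp add: add_increasing2)
  then show ?thesis
    by (simp add: jbr_def algebra_simps)
qed

lemma jbr_powr_add_ge: "jbr c powr p * jbr x powr (- \<bar>p\<bar>) \<le> jbr (x + c) powr p"
proof (cases "p \<ge> 0")
  case True
  have "jbr c \<le> jbr (x + c) * jbr x"
    using jbr_add_le[of "x + c" "- x"] by simp
  then have "(jbr c / jbr x) powr p \<le> jbr (x + c) powr p"
    using True jbr_pos[of x] jbr_pos[of c] by (intro powr_mono2) (auto simp: divide_le_eq)
  then show ?thesis
    using True jbr_pos[of c] jbr_pos[of x] by (simp add: powr_divide powr_minus_divide)
next
  case False
  have "(jbr x * jbr c) powr p \<le> jbr (x + c) powr p"
    using False jbr_add_le[of x c] jbr_pos[of "x + c"] by (intro powr_mono2') auto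
  then show ?thesis
    using False jbr_pos[of c] jbr_pos[of x] by (simp add: powr_mult mult.commute)
qed

lemma jbr_powr_add_le: "jbr (x + c) powr p \<le> jbr c powr \<bar>p\<bar> * jbr x powr \<bar>p\<bar>"
proof -
  have "jbr (x + c) powr p \<le> jbr (x + c) powr \<bar>p\<bar>"
    using jbr_ge_1 by (intro powr_mono) auto
  also have "\<dots> \<le> (jbr c * jbr x) powr \<bar>p\<bar>"
    using jbr_add_le[of x c] jbr_pos[of "x + c"] by (intro powr_mono2) (auto simp: mult.commute)
  finally show ?thesis
    using jbr_pos by (simp add: powr_mult)
qed

lemma jbr_square_powr_ge: "2 powr (- \<bar>q\<bar>) * jbr x powr (2 * q) \<le> jbr (x\<^sup>2) powr q"
proof -
  have sq_eq: "jbr (x\<^sup>2) = 1 + \<bar>x\<bar>\<^sup>2" and jbr_eq: "jbr x = 1 + \<bar>x\<bar>"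
    by (simp_all add: jbr_def)
  have lower: "jbr x ^ 2 / 2 \<le> jbr (x\<^sup>2)"
    using zero_le_power2[of "\<bar>x\<bar> - 1"] unfolding sq_eq jbr_eq
    by (simp add: power2_eq_square algebra_simps)
  have upper: "jbr (x\<^sup>2) \<le> jbr x ^ 2"
    unfolding sq_eq jbr_eq by (simp add: power2_eq_square field_simps)
  have sq: "(jbr x ^ 2) powr q = jbr x powr (2 * q)"
    unfolding powr_numeral[symmetric, OF less_imp_le[OF jbr_pos]] powr_powr ..
  show ?thesis
  proof (cases "q \<ge> 0")
    case True
    have "(jbr x ^ 2 / 2) powr q \<le> jbr (x\<^sup>2) powr q"
      using lower True jbr_pos[of x] by (intro powr_mono2) auto
    then show ?thesis
      using True jbr_pos[of x] by (simp add: powr_divide sq powr_minus_divide)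
  next
    case False
    have "jbr x powr (2 * q) \<le> jbr (x\<^sup>2) powr q"
      unfolding sq[symmetric] using upper False jbr_pos[of "x\<^sup>2"] by (intro powr_mono2') auto
    moreover have "2 powr (- \<bar>q\<bar>) \<le> 1"
      using powr_mono[of "- \<bar>q\<bar>" 0 "2::real"] by simp
    ultimately show ?thesis
      by (meson mult_left_le_one_le order_trans powr_ge_zero)
  qed
qed

lemma jbr_powr_times_gaussian_le:
  assumes "r > 0" "M \<ge> 0"
  shows "jbr t powr M * exp (- r * t\<^sup>2) \<le> exp (M\<^sup>2 / (4 * r))"
proof -
  have "jbr t powr M \<le> exp \<bar>t\<bar> powr M"
    using assms(2) jbr_pos[of t] exp_ge_add_one_self[of "\<bar>t\<bar>"]
    by (intro powr_mono2) (auto simp: jbr_def)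
  then have "jbr t powr M * exp (- r * t\<^sup>2) \<le> exp (M * \<bar>t\<bar> - r * t\<^sup>2)"
    by (simp add: powr_def exp_diff exp_minus field_simps)
  also have "\<dots> \<le> exp (M\<^sup>2 / (4 * r))"
  proof -
    have "4 * r * (M * \<bar>t\<bar> - r * t\<^sup>2) \<le> M\<^sup>2"
      using zero_le_power2[of "M - 2 * r * \<bar>t\<bar>"] by (simp add: power2_eq_square algebra_simps)
    then show ?thesis
      using assms(1) by (simp add: field_simps)
  qed
  finally show ?thesis .
qed

text \<open>The polynomial factor makes the family closed under both partial derivatives; only \<open>q = 1\<close>
  is tested against the estimate.\<close>

definition wave_packet :: "int \<Rightarrow> real \<Rightarrow> real \<Rightarrow> complex poly \<Rightarrow> real \<times> real \<Rightarrow> complex" where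
  "wave_packet n a r q = (\<lambda>(x, t). exp (\<i> * of_int n * of_real x) *
     (poly q (of_real t) * exp (\<i> * of_real a * of_real t - of_real r * (of_real t)\<^sup>2)))"

lemma has_vector_derivative_wave_packet_x:
  "((\<lambda>y. exp (\<i> * of_int n * of_real y) * K) has_vector_derivative
     (\<i> * of_int n * exp (\<i> * of_int n * of_real x) * K)) (at x)"
proof -
  have "((\<lambda>z. exp (\<i> * of_int n * z) * K) has_field_derivative
     (\<i> * of_int n * exp (\<i> * of_int n * of_real x) * K)) (at (of_real x))"
    by (auto intro!: derivative_eq_intros simp: algebra_simps)
  from has_vector_derivative_real_field[OF this] show ?thesis
    by simp
qed

lemma has_vector_derivative_wave_packet_t:
  "((\<lambda>y. K * (poly q (of_real y) * exp (\<i> * of_real a * of_real y - of_real r * (of_real y)\<^sup>2)))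
     has_vector_derivative
   (K * (poly (pderiv q + q * [:\<i> * of_real a, - 2 * of_real r:]) (of_real t) *
     exp (\<i> * of_real a * of_real t - of_real r * (of_real t)\<^sup>2)))) (at t)"
proof -
  have "((\<lambda>z. K * (poly q z * exp (\<i> * of_real a * z - of_real r * z\<^sup>2))) has_field_derivative
     (K * (poly (pderiv q + q * [:\<i> * of_real a, - 2 * of_real r:]) (of_real t) *
     exp (\<i> * of_real a * of_real t - of_real r * (of_real t)\<^sup>2)))) (at (of_real t))"
    by (auto intro!: derivative_eq_intros poly_DERIV[THEN DERIV_chain2]
        simp: algebra_simps power2_eq_square)
  from has_vector_derivative_real_field[OF this] show ?thesis
    by simp
qed

lemma partial_wave_packet:
  "partial d (wave_packet n a r q) = wave_packet n a r
     (if d = 0 then smult (\<i> * of_int n) q else pderiv q + q * [:\<i> * of_real a, - 2 * of_real r:])"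
proof (intro ext, clarify)
  fix x t
  show "partial d (wave_packet n a r q) (x, t) = wave_packet n a r
     (if d = 0 then smult (\<i> * of_int n) q else pderiv q + q * [:\<i> * of_real a, - 2 * of_real r:]) (x, t)"
  proof (cases "d = 0")
    case True
    then show ?thesis
      unfolding partial_def wave_packet_def
      by (simp only: prod.case if_True vector_derivative_at[OF has_vector_derivative_wave_packet_x])
         (simp add: algebra_simps)
  next
    case False
    then show ?thesis
      unfolding partial_def wave_packet_def
      by (simp only: prod.case if_False vector_derivative_at[OF has_vector_derivative_wave_packet_t])
  qed
qed

lemma pd_wave_packet: "\<exists>q'. pd ds (wave_packet n a r q) = wave_packet n a r q'"
  by (induction ds) (auto simp: partial_wave_packet)

lemma smooth2_wave_packet: "smooth2 (wave_packet n a r q)"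
  unfolding smooth2_def
proof (intro allI conjI)
  fix ds x t
  obtain q' where pd_eq: "pd ds (wave_packet n a r q) = wave_packet n a r q'"
    using pd_wave_packet by blast
  show "continuous_on UNIV (pd ds (wave_packet n a r q))"
    unfolding pd_eq by (unfold wave_packet_def split_beta) (intro continuous_intros)
  show "(\<lambda>y. pd ds (wave_packet n a r q) (y, t)) differentiable at x"
    unfolding pd_eq
    by (unfold wave_packet_def prod.case) (rule differentiableI_vector[OF has_vector_derivative_wave_packet_x])
  show "(\<lambda>s. pd ds (wave_packet n a r q) (x, s)) differentiable at t"
    unfolding pd_eq
    by (unfold wave_packet_def prod.case) (rule differentiableI_vector[OF has_vector_derivative_wave_packet_t])
qed

lemma exp_int_2pi: "exp (\<i> * of_int n * of_real (2 * pi)) = 1"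
proof -
  have "exp (\<i> * of_int n * of_real (2 * pi)) = exp ((2 * of_int n * pi) * \<i>)"
    by (simp add: ac_simps)
  also have "\<dots> = 1"
    by (rule exp_integer_2pi) simp
  finally show ?thesis .
qed

lemma norm_wave_packet: "norm (wave_packet n a r q (x, t)) = norm (poly q (of_real t)) * exp (- r * t\<^sup>2)"
  unfolding wave_packet_def by (simp add: norm_mult norm_exp_eq_Re power2_eq_square)

lemma poly_bounded_by_jbr_power:
  fixes q :: "complex poly"
  shows "\<exists>B d. \<forall>t::real. norm (poly q (of_real t)) \<le> B * jbr t ^ d"
proof (induction q)
  case (pCons c p)
  then obtain B d where Bd: "\<And>t::real. norm (poly p (of_real t)) \<le> B * jbr t ^ d"
    by blast
  have "norm (poly (pCons c p) (of_real t)) \<le> (norm c + \<bar>B\<bar>) * jbr t ^ Suc d" for t :: real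
  proof -
    have one_le: "1 \<le> jbr t ^ Suc d"
      using jbr_ge_1 by (intro one_le_power)
    have "norm (poly (pCons c p) (of_real t)) \<le> norm c + \<bar>t\<bar> * norm (poly p (of_real t))"
      using norm_triangle_ineq[of c "of_real t * poly p (of_real t)"] by (simp add: norm_mult)
    also have "\<dots> \<le> norm c * jbr t ^ Suc d + jbr t * (\<bar>B\<bar> * jbr t ^ d)"
      using Bd[of t] one_le
      by (intro add_mono mult_mono) (auto simp: jbr_def mult_le_cancel_left1 intro: order_trans)
    also have "\<dots> = (norm c + \<bar>B\<bar>) * jbr t ^ Suc d"
      by (simp add: algebra_simps)
    finally show ?thesis .
  qed
  then show ?case
    by blast
qed (rule exI[of _ 0], simp)

lemma wave_packet_decay:
  assumes "r > 0"
  shows "\<exists>C. \<forall>x t. (1 + \<bar>t\<bar>) ^ N * norm (wave_packet n a r q (x, t)) \<le> C"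
proof -
  obtain B d where Bd: "\<And>t::real. norm (poly q (of_real t)) \<le> B * jbr t ^ d"
    using poly_bounded_by_jbr_power by blast
  have "(1 + \<bar>t\<bar>) ^ N * norm (wave_packet n a r q (x, t)) \<le> \<bar>B\<bar> * exp ((real (N + d))\<^sup>2 / (4 * r))"
    for x t
  proof -
    have "(1 + \<bar>t\<bar>) ^ N * norm (wave_packet n a r q (x, t)) \<le> jbr t ^ N * (\<bar>B\<bar> * jbr t ^ d * exp (- r * t\<^sup>2))"
    proof -
      have "norm (poly q (of_real t)) \<le> \<bar>B\<bar> * jbr t ^ d"
        using Bd[of t] mult_right_mono[OF abs_ge_self[of B] zero_le_power[OF less_imp_le[OF jbr_pos]]]
        by (rule order_trans)
      then show ?thesis
        unfolding norm_wave_packet jbr_def[symmetric] using jbr_pos[of t]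
        by (intro mult_right_mono mult_left_mono) auto
    qed
    also have "\<dots> = \<bar>B\<bar> * (jbr t powr real (N + d) * exp (- r * t\<^sup>2))"
      using powr_realpow[OF jbr_pos, of t "N + d"] by (simp add: power_add)
    also have "\<dots> \<le> \<bar>B\<bar> * exp ((real (N + d))\<^sup>2 / (4 * r))"
      using assms by (intro mult_left_mono jbr_powr_times_gaussian_le) auto
    finally show ?thesis .
  qed
  then show ?thesis
    by blast
qed

lemma test_fun_wave_packet:
  assumes "r > 0"
  shows "test_fun (wave_packet n a r q)"
  unfolding test_fun_def
proof (intro conjI allI)
  show "smooth2 (wave_packet n a r q)"
    by (rule smooth2_wave_packet)
  show "wave_packet n a r q (x + 2 * pi, t) = wave_packet n a r q (x, t)" for x t
    unfolding wave_packet_def using exp_int_2pi[of n] by (simp add: distrib_left exp_add)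
  show "\<exists>C. \<forall>x t. (1 + \<bar>t\<bar>) ^ N * norm (pd ds (wave_packet n a r q) (x, t)) \<le> C" for ds N
    using pd_wave_packet[of ds n a r q] wave_packet_decay[OF assms] by metis
qed

lemma integral_exp_circle:
  "(LINT x:{0..2*pi}|lborel. exp (\<i> * of_int k * of_real x)) = (if k = 0 then of_real (2 * pi) else 0)"
proof (cases "k = 0")
  case True
  have "(LINT x:{0..2*pi}|lborel. exp (\<i> * of_int k * of_real x)) = (CLBINT x=ereal 0..ereal (2*pi). 1)"
    using True interval_integral_Icc[of 0 "2*pi" "\<lambda>x. 1::complex", simplified] by simp
  also have "\<dots> = of_real (2*pi) - of_real 0"
    by (rule interval_integral_FTC_finite[where F = "\<lambda>x. of_real x"])
       (auto intro!: derivative_eq_intros continuous_intros)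
  finally show ?thesis
    using True by simp
next
  case False
  have "(LINT x:{0..2*pi}|lborel. exp (\<i> * of_int k * of_real x)) =
      (CLBINT x=ereal 0..ereal (2*pi). exp (\<i> * of_int k * of_real x))"
    using interval_integral_Icc[of 0 "2*pi" "\<lambda>x. exp (\<i> * of_int k * of_real x)"] by simp
  also have "\<dots> = exp (\<i> * of_int k * of_real (2*pi)) / (\<i> * of_int k) - exp (\<i> * of_int k * of_real 0) / (\<i> * of_int k)"
  proof (rule interval_integral_FTC_finite)
    show "continuous_on {min 0 (2 * pi)..max 0 (2 * pi)} (\<lambda>x. exp (\<i> * of_int k * of_real x))"
      by (intro continuous_intros)
    fix x :: real
    have "((\<lambda>z. exp (\<i> * of_int k * z) / (\<i> * of_int k)) has_field_derivative exp (\<i> * of_int k * of_real x))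
        (at (of_real x))"
      using False by (auto intro!: derivative_eq_intros)
    from has_vector_derivative_real_field[OF this]
    show "((\<lambda>x. exp (\<i> * of_int k * of_real x) / (\<i> * of_int k)) has_vector_derivative
        exp (\<i> * of_int k * of_real x)) (at x within {min 0 (2 * pi)..max 0 (2 * pi)})" .
  qed
  also have "\<dots> = 0"
    using exp_int_2pi[of k] by simp
  finally show ?thesis
    using False by simp
qed

text \<open>No integrability of \<open>h\<close> is needed: if \<open>h t * cis (- (\<tau> * t))\<close> is not integrable,
  both sides are 0.\<close>

lemma FT_mode_times:
  "FT (\<lambda>(x, t). exp (\<i> * of_int n * of_real x) * h t) m \<tau> =
     (if m = n then of_real (2 * pi) else 0) * (LINT t|lborel. h t * cis (- (\<tau> * t)))"
proof -
  have inner: "(LINT t|lborel. exp (\<i> * of_int n * of_real x) * h t * cis (- (real_of_int m * x + \<tau> * t)))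
     = exp (\<i> * of_int (n - m) * of_real x) * (LINT t|lborel. h t * cis (- (\<tau> * t)))" for x
  proof -
    have mode: "exp (\<i> * of_int n * of_real x) * cis (- (real_of_int m * x)) = exp (\<i> * of_int (n - m) * of_real x)"
      by (simp add: cis_conv_exp exp_add[symmetric] algebra_simps)
    have split: "cis (- (real_of_int m * x + \<tau> * t)) = cis (- (real_of_int m * x)) * cis (- (\<tau> * t))" for t
      by (simp add: cis_mult)
    have "exp (\<i> * of_int n * of_real x) * h t * cis (- (real_of_int m * x + \<tau> * t))
        = exp (\<i> * of_int n * of_real x) * cis (- (real_of_int m * x)) * (h t * cis (- (\<tau> * t)))" for t
      unfolding split by (simp only: mult_ac)
    then have pointwise: "exp (\<i> * of_int n * of_real x) * h t * cis (- (real_of_int m * x + \<tau> * t))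
        = exp (\<i> * of_int (n - m) * of_real x) * (h t * cis (- (\<tau> * t)))" for t
      unfolding mode .
    show ?thesis
      by (simp only: pointwise integral_mult_right_zero)
  qed
  have "FT (\<lambda>(x, t). exp (\<i> * of_int n * of_real x) * h t) m \<tau> =
      (LINT x:{0..2*pi}|lborel. exp (\<i> * of_int (n - m) * of_real x) * (LINT t|lborel. h t * cis (- (\<tau> * t))))"
    unfolding FT_def by (simp only: prod.case inner)
  also have "\<dots> = (if n - m = 0 then of_real (2*pi) else 0) * (LINT t|lborel. h t * cis (- (\<tau> * t)))"
    by (simp only: set_integral_mult_left integral_exp_circle)
  finally show ?thesis
    by simp
qed

lemma fourier_transform_gaussian:
  assumes "r > 0"
  shows "(LINT t|lborel. of_real (exp (- r * t\<^sup>2)) * cis (\<theta> * t)) =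
    of_real (sqrt (pi / r) * exp (- \<theta>\<^sup>2 / (4 * r)))"
proof -
  have std: "(LINT x|lborel. of_real (exp (- x\<^sup>2 / 2)) * cis (\<theta> * x)) =
      complex_of_real (sqrt (2 * pi) * exp (- \<theta>\<^sup>2 / 2))" for \<theta>
  proof -
    have "complex_of_real (exp (- \<theta>\<^sup>2 / 2)) = char std_normal_distribution \<theta>"
      by (simp add: char_std_normal_distribution)
    also have "\<dots> = (LINT x|lborel. std_normal_density x *\<^sub>R iexp (\<theta> * x))"
      unfolding char_def by (rule integral_density) (auto simp: normal_density_nonneg)
    also have "\<dots> = (LINT x|lborel. of_real (1 / sqrt (2 * pi)) * (of_real (exp (- x\<^sup>2 / 2)) * cis (\<theta> * x)))"
      by (simp add: std_normal_density_def scaleR_conv_of_real cis_conv_exp mult_ac)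
    finally show ?thesis
      by (simp add: field_simps)
  qed
  define c where "c = 1 / sqrt (2 * r)"
  have c: "c > 0" "r * c\<^sup>2 = 1 / 2"
    using assms by (auto simp: c_def power_divide)
  have rc: "r * (c * x)\<^sup>2 = x\<^sup>2 / 2" for x
  proof -
    have "r * (c * x)\<^sup>2 = (r * c\<^sup>2) * x\<^sup>2"
      by (simp add: power_mult_distrib)
    then show ?thesis
      using c(2) by simp
  qed
  have "(LINT t|lborel. of_real (exp (- r * t\<^sup>2)) * cis (\<theta> * t)) =
      c *\<^sub>R (LINT x|lborel. of_real (exp (- r * (0 + c * x)\<^sup>2)) * cis (\<theta> * (0 + c * x)))"
    using lborel_integral_real_affine[of c "\<lambda>t. of_real (exp (- r * t\<^sup>2)) * cis (\<theta> * t)" 0] c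
    by simp
  also have "\<dots> = c *\<^sub>R (LINT x|lborel. of_real (exp (- x\<^sup>2 / 2)) * cis ((\<theta> * c) * x))"
    by (simp add: rc mult.assoc)
  also have "\<dots> = of_real (c * (sqrt (2 * pi) * exp (- (\<theta> * c)\<^sup>2 / 2)))"
    unfolding std scaleR_conv_of_real by simp
  also have "c * (sqrt (2 * pi) * exp (- (\<theta> * c)\<^sup>2 / 2)) = sqrt (pi / r) * exp (- \<theta>\<^sup>2 / (4 * r))"
  proof -
    have "exp (- (\<theta> * c)\<^sup>2 / 2) = exp (- \<theta>\<^sup>2 / (4 * r))" and "c * sqrt (2 * pi) = sqrt (pi / r)"
      using assms by (simp_all add: c_def power_mult_distrib power_divide real_sqrt_divide real_sqrt_mult)
    then show ?thesis
      by (simp only: mult.assoc[symmetric])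
  qed
  finally show ?thesis .
qed

lemma wave_packet_1:
  "wave_packet n a r 1 = (\<lambda>(x, t). exp (\<i> * of_int n * of_real x) * (of_real (exp (- r * t\<^sup>2)) * cis (a * t)))"
proof -
  have "exp (\<i> * of_real a * of_real t - of_real r * (of_real t)\<^sup>2) = of_real (exp (- r * t\<^sup>2)) * cis (a * t)" for t
  proof -
    have exponent: "\<i> * of_real a * of_real t - of_real r * (of_real t)\<^sup>2 = of_real (- r * t\<^sup>2) + \<i> * of_real (a * t)"
      by simp
    show ?thesis
      unfolding exponent exp_add exp_of_real cis_conv_exp ..
  qed
  then show ?thesis
    by (simp add: wave_packet_def)
qed

lemma wave_packet_mult:
  "wave_packet n1 a1 r1 1 p * wave_packet n2 a2 r2 1 p = wave_packet (n1 + n2) (a1 + a2) (r1 + r2) 1 p"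
  unfolding wave_packet_def split_beta
  by (simp add: exp_add[symmetric] algebra_simps)

lemma FT_wave_packet:
  assumes "r > 0"
  shows "FT (wave_packet n a r 1) m \<tau> =
    (if m = n then of_real (2 * pi) else 0) * of_real (sqrt (pi / r) * exp (- (\<tau> - a)\<^sup>2 / (4 * r)))"
proof -
  have integrand: "(\<lambda>t. of_real (exp (- r * t\<^sup>2)) * cis (a * t) * cis (- (\<tau> * t))) =
      (\<lambda>t. of_real (exp (- r * t\<^sup>2)) * cis ((a - \<tau>) * t))"
    by (auto simp: mult.assoc cis_mult algebra_simps)
  show ?thesis
    unfolding wave_packet_1 FT_mode_times integrand fourier_transform_gaussian[OF assms]
    by (simp add: power2_commute)
qed

definition Xsb_norm_sq :: "real \<Rightarrow> real \<Rightarrow> (int \<Rightarrow> real) \<Rightarrow> (real \<times> real \<Rightarrow> complex) \<Rightarrow> ennreal" where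
  "Xsb_norm_sq s b \<omega> f = (\<integral>\<^sup>+ n. (\<integral>\<^sup>+ \<tau>. ennreal (jbr (real_of_int n) powr (2 * s)
      * jbr (\<tau> + \<omega> n) powr (2 * b) * (cmod (FT f n \<tau>))\<^sup>2) \<partial>lborel) \<partial>count_space UNIV)"

lemma Xper_norm_eq: "Xper_norm s b f = ennsqrt (Xsb_norm_sq s b (\<lambda>n. (real_of_int n)\<^sup>2) f)"
  by (simp add: Xper_norm_def Xsb_norm_sq_def)

lemma HH_norm_eq: "HH_norm b s f = ennsqrt (Xsb_norm_sq s b (\<lambda>_. 0) f)"
  by (simp add: HH_norm_def Xsb_norm_sq_def)

definition gauss_moment :: "real \<Rightarrow> real \<Rightarrow> real \<Rightarrow> real" where
  "gauss_moment p c r = (\<integral>\<sigma>. jbr (\<sigma> + c) powr p * exp (- \<sigma>\<^sup>2 / (2 * r)) \<partial>lborel)"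

lemma integrable_gauss_moment:
  assumes "r > 0"
  shows "integrable lborel (\<lambda>\<sigma>. jbr (\<sigma> + c) powr p * exp (- \<sigma>\<^sup>2 / (2 * r)))"
proof (rule Bochner_Integration.integrable_bound)
  define K where "K = jbr c powr \<bar>p\<bar> * exp (p\<^sup>2 * r) * sqrt (4 * pi * r)"
  show "integrable lborel (\<lambda>\<sigma>. K * normal_density 0 (sqrt (2 * r)) \<sigma>)"
    using assms by (intro integrable_mult_right integrable_normal_density) simp
  have "jbr (\<sigma> + c) powr p * exp (- \<sigma>\<^sup>2 / (2 * r)) \<le> K * normal_density 0 (sqrt (2 * r)) \<sigma>" for \<sigma>
  proof -
    have split: "exp (- \<sigma>\<^sup>2 / (2 * r)) = exp (- (1 / (4 * r)) * \<sigma>\<^sup>2) * exp (- \<sigma>\<^sup>2 / (4 * r))"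
      by (simp add: exp_add[symmetric] field_simps)
    have density: "exp (- \<sigma>\<^sup>2 / (4 * r)) = sqrt (4 * pi * r) * normal_density 0 (sqrt (2 * r)) \<sigma>"
      using assms by (simp add: normal_density_def field_simps)
    have "jbr \<sigma> powr \<bar>p\<bar> * exp (- (1 / (4 * r)) * \<sigma>\<^sup>2) \<le> exp (\<bar>p\<bar>\<^sup>2 / (4 * (1 / (4 * r))))"
      using assms by (intro jbr_powr_times_gaussian_le) auto
    then have gauss: "jbr \<sigma> powr \<bar>p\<bar> * exp (- (1 / (4 * r)) * \<sigma>\<^sup>2) \<le> exp (p\<^sup>2 * r)"
      using assms by simp
    have "jbr (\<sigma> + c) powr p * exp (- (1 / (4 * r)) * \<sigma>\<^sup>2) \<le>
        jbr c powr \<bar>p\<bar> * (jbr \<sigma> powr \<bar>p\<bar> * exp (- (1 / (4 * r)) * \<sigma>\<^sup>2))"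
      using jbr_powr_add_le[of \<sigma> c p] by (simp add: mult.assoc[symmetric])
    also have "\<dots> \<le> jbr c powr \<bar>p\<bar> * exp (p\<^sup>2 * r)"
      using gauss by (simp add: mult_left_mono)
    finally have "jbr (\<sigma> + c) powr p * exp (- (1 / (4 * r)) * \<sigma>\<^sup>2) \<le> jbr c powr \<bar>p\<bar> * exp (p\<^sup>2 * r)" .
    then show ?thesis
      unfolding split density K_def mult.assoc[symmetric] using assms by (intro mult_right_mono) auto
  qed
  then show "AE \<sigma> in lborel. norm (jbr (\<sigma> + c) powr p * exp (- \<sigma>\<^sup>2 / (2 * r)))
      \<le> norm (K * normal_density 0 (sqrt (2 * r)) \<sigma>)"
    by (intro AE_I2) (simp add: K_def order_trans[OF _ abs_ge_self])
qed simp

lemma gauss_moment_pos: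
  assumes "r > 0"
  shows "gauss_moment p c r > 0"
proof -
  have not_zero: "\<not> (AE \<sigma> in lborel. jbr (\<sigma> + c) powr p * exp (- \<sigma>\<^sup>2 / (2 * r)) = 0)"
  proof
    assume "AE \<sigma> in lborel. jbr (\<sigma> + c) powr p * exp (- \<sigma>\<^sup>2 / (2 * r)) = 0"
    then have "AE \<sigma>::real in lborel. False"
    proof eventually_elim
      case (elim \<sigma>)
      then show False
        using jbr_pos[of "\<sigma> + c"] by simp
    qed
    then show False
      by (simp add: AE_iff_null null_sets_def)
  qed
  have "gauss_moment p c r \<ge> 0"
    unfolding gauss_moment_def by (intro integral_nonneg_AE) simp
  moreover have "gauss_moment p c r \<noteq> 0"
    unfolding gauss_moment_def using not_zero
    by (subst integral_nonneg_eq_0_iff_AE[OF integrable_gauss_moment[OF assms]]) auto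
  ultimately show ?thesis
    by simp
qed

lemma gauss_moment_ge:
  assumes "r > 0"
  shows "jbr c powr p * gauss_moment (- \<bar>p\<bar>) 0 r \<le> gauss_moment p c r"
proof -
  have "jbr c powr p * gauss_moment (- \<bar>p\<bar>) 0 r =
      (\<integral>\<sigma>. jbr c powr p * (jbr \<sigma> powr (- \<bar>p\<bar>) * exp (- \<sigma>\<^sup>2 / (2 * r))) \<partial>lborel)"
    unfolding gauss_moment_def by simp
  also have "\<dots> \<le> gauss_moment p c r"
    unfolding gauss_moment_def using integrable_gauss_moment[OF assms]
  proof (intro integral_mono)
    fix \<sigma>
    show "jbr c powr p * (jbr \<sigma> powr (- \<bar>p\<bar>) * exp (- \<sigma>\<^sup>2 / (2 * r))) \<le>
        jbr (\<sigma> + c) powr p * exp (- \<sigma>\<^sup>2 / (2 * r))"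
      using jbr_powr_add_ge[of c p \<sigma>] by (simp add: mult.assoc[symmetric])
  qed (use integrable_gauss_moment[OF assms, of 0 "- \<bar>p\<bar>"] in auto)
  finally show ?thesis .
qed

lemma Xsb_norm_sq_single_mode:
  assumes "\<And>m \<tau>. m \<noteq> n \<Longrightarrow> FT f m \<tau> = 0"
  shows "Xsb_norm_sq s b \<omega> f = (\<integral>\<^sup>+ \<tau>. ennreal (jbr (real_of_int n) powr (2 * s) *
    jbr (\<tau> + \<omega> n) powr (2 * b) * (cmod (FT f n \<tau>))\<^sup>2) \<partial>lborel)"
proof -
  let ?I = "\<lambda>m. \<integral>\<^sup>+ \<tau>. ennreal (jbr (real_of_int m) powr (2 * s) *
    jbr (\<tau> + \<omega> m) powr (2 * b) * (cmod (FT f m \<tau>))\<^sup>2) \<partial>lborel"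
  have "?I = (\<lambda>m. ?I n * indicator {n} m)"
    using assms by (auto simp: fun_eq_iff indicator_def)
  then show ?thesis
    unfolding Xsb_norm_sq_def by (simp only: nn_integral_cmult_indicator) simp
qed

lemma norm_FT_wave_packet_sq:
  assumes "r > 0"
  shows "(cmod (FT (wave_packet n a r 1) n \<tau>))\<^sup>2 = 4 * pi ^ 3 / r * exp (- (\<tau> - a)\<^sup>2 / (2 * r))"
proof -
  have "(exp (- (\<tau> - a)\<^sup>2 / (4 * r)))\<^sup>2 = exp (- (\<tau> - a)\<^sup>2 / (2 * r))"
    by (simp add: exp_add[symmetric] power2_eq_square field_simps)
  moreover have "(2 * pi * (sqrt (pi / r) * E))\<^sup>2 = 4 * pi ^ 3 / r * E\<^sup>2" for E
    using assms by (simp add: power_mult_distrib power2_eq_square[of pi] power3_eq_cube)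
  moreover have "\<bar>sqrt (pi / r)\<bar> = sqrt (pi / r)"
    using assms by simp
  ultimately show ?thesis
    unfolding FT_wave_packet[OF assms] of_real_mult[symmetric] by (simp add: norm_mult abs_mult)
qed

lemma Xsb_norm_sq_wave_packet:
  assumes "r > 0"
  shows "Xsb_norm_sq s b \<omega> (wave_packet n a r 1) =
    ennreal (4 * pi ^ 3 / r * jbr (real_of_int n) powr (2 * s) * gauss_moment (2 * b) (a + \<omega> n) r)"
proof -
  define K where "K = 4 * pi ^ 3 / r * jbr (real_of_int n) powr (2 * s)"
  have K: "K \<ge> 0"
    using assms by (simp add: K_def)
  have "Xsb_norm_sq s b \<omega> (wave_packet n a r 1) = (\<integral>\<^sup>+ \<tau>. ennreal (jbr (real_of_int n) powr (2 * s) *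
      jbr (\<tau> + \<omega> n) powr (2 * b) * (cmod (FT (wave_packet n a r 1) n \<tau>))\<^sup>2) \<partial>lborel)"
    by (rule Xsb_norm_sq_single_mode) (simp add: FT_wave_packet[OF assms])
  also have "\<dots> = (\<integral>\<^sup>+ \<tau>. ennreal (K * (jbr (\<tau> + \<omega> n) powr (2 * b) *
      exp (- (\<tau> - a)\<^sup>2 / (2 * r)))) \<partial>lborel)"
    by (simp add: norm_FT_wave_packet_sq[OF assms] K_def mult_ac)
  also have "\<dots> = ennreal \<bar>1\<bar> * (\<integral>\<^sup>+ \<sigma>. ennreal (K * (jbr ((a + 1 * \<sigma>) + \<omega> n) powr (2 * b) *
      exp (- ((a + 1 * \<sigma>) - a)\<^sup>2 / (2 * r)))) \<partial>lborel)"
    by (rule nn_integral_real_affine) auto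
  also have "\<dots> = (\<integral>\<^sup>+ \<sigma>. ennreal (K * (jbr (\<sigma> + (a + \<omega> n)) powr (2 * b) *
      exp (- \<sigma>\<^sup>2 / (2 * r)))) \<partial>lborel)"
    by (simp add: ac_simps)
  also have "\<dots> = ennreal (K * gauss_moment (2 * b) (a + \<omega> n) r)"
    unfolding gauss_moment_def using integrable_gauss_moment[OF assms] K
    by (subst nn_integral_eq_integral) auto
  finally show ?thesis
    by (simp add: K_def)
qed

lemma ennsqrt_ennreal: "ennsqrt (ennreal x) = ennreal (sqrt x)"
  by (cases "x \<ge> 0") (simp_all add: ennsqrt_def ennreal_neg)

lemma ennreal_sqrt_le_mult_imp_le:
  assumes le: "ennreal (sqrt A) \<le> ennreal C * ennreal (sqrt B) * ennreal (sqrt D)"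
    and "A \<ge> 0" "B \<ge> 0" "D \<ge> 0"
  shows "A \<le> (max 0 C)\<^sup>2 * B * D"
proof -
  have "ennreal C = ennreal (max 0 C)"
    by (simp add: ennreal_max_0)
  then have "ennreal (sqrt A) \<le> ennreal (max 0 C * sqrt B * sqrt D)"
    using le assms(3,4) by (simp add: ennreal_mult)
  then have "sqrt A \<le> max 0 C * sqrt B * sqrt D"
    using assms(3,4) by (subst (asm) ennreal_le_iff) auto
  then have "(sqrt A)\<^sup>2 \<le> (max 0 C * sqrt B * sqrt D)\<^sup>2"
    using assms(2) by (intro power_mono) auto
  then show ?thesis
    using assms(2-4) by (simp add: power_mult_distrib)
qed

lemma bilinear_estimate_on_wave_packets:
  assumes est: "\<forall>u v. test_fun u \<longrightarrow> test_fun v \<longrightarrow>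
      Xper_norm k b (\<lambda>p. u p * v p) \<le> ennreal C * Xper_norm k b1 u * HH_norm b2 s v"
    and r: "r1 > 0" "r2 > 0"
  shows "4 * pi ^ 3 / (r1 + r2) * jbr (real_of_int (n1 + n2)) powr (2 * k) *
      gauss_moment (2 * b) (a1 + a2 + (real_of_int (n1 + n2))\<^sup>2) (r1 + r2)
    \<le> (max 0 C)\<^sup>2 * (4 * pi ^ 3 / r1 * jbr (real_of_int n1) powr (2 * k) *
      gauss_moment (2 * b1) (a1 + (real_of_int n1)\<^sup>2) r1) *
      (4 * pi ^ 3 / r2 * jbr (real_of_int n2) powr (2 * s) * gauss_moment (2 * b2) a2 r2)"
proof -
  let ?u = "wave_packet n1 a1 r1 1" and ?v = "wave_packet n2 a2 r2 1"
  have product: "(\<lambda>p. ?u p * ?v p) = wave_packet (n1 + n2) (a1 + a2) (r1 + r2) 1"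
    by (rule ext) (rule wave_packet_mult)
  have est_uv: "Xper_norm k b (\<lambda>p. ?u p * ?v p) \<le> ennreal C * Xper_norm k b1 ?u * HH_norm b2 s ?v"
    using est test_fun_wave_packet[OF r(1)] test_fun_wave_packet[OF r(2)] by simp
  have uv: "Xper_norm k b (\<lambda>p. ?u p * ?v p) = ennreal (sqrt (4 * pi ^ 3 / (r1 + r2) *
      jbr (real_of_int (n1 + n2)) powr (2 * k) *
      gauss_moment (2 * b) (a1 + a2 + (real_of_int (n1 + n2))\<^sup>2) (r1 + r2)))"
    unfolding product Xper_norm_eq Xsb_norm_sq_wave_packet[OF add_pos_pos[OF r]] ennsqrt_ennreal ..
  have u: "Xper_norm k b1 ?u = ennreal (sqrt (4 * pi ^ 3 / r1 * jbr (real_of_int n1) powr (2 * k) *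
      gauss_moment (2 * b1) (a1 + (real_of_int n1)\<^sup>2) r1))"
    unfolding Xper_norm_eq Xsb_norm_sq_wave_packet[OF r(1)] ennsqrt_ennreal ..
  have v: "HH_norm b2 s ?v = ennreal (sqrt (4 * pi ^ 3 / r2 * jbr (real_of_int n2) powr (2 * s) *
      gauss_moment (2 * b2) a2 r2))"
    unfolding HH_norm_eq Xsb_norm_sq_wave_packet[OF r(2)] ennsqrt_ennreal by simp
  from est_uv show ?thesis
    unfolding uv u v
    by (rule ennreal_sqrt_le_mult_imp_le)
      (use r in \<open>auto intro!: mult_nonneg_nonneg divide_nonneg_pos less_imp_le[OF gauss_moment_pos]\<close>)
qed

lemma powr_bounded_imp_nonpos:
  assumes "c > 0" and bounded: "\<And>N::nat. (1 + c * real N) powr p \<le> M"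
  shows "p \<le> 0"
proof (rule ccontr)
  assume "\<not> p \<le> 0"
  then have p: "p > 0"
    by simp
  obtain N :: nat where N: "M powr (1 / p) / c < real N"
    using reals_Archimedean2 by blast
  have "1 + c * real N = ((1 + c * real N) powr p) powr (1 / p)"
    using p assms(1) by (simp add: powr_powr)
  also have "\<dots> \<le> M powr (1 / p)"
    using bounded[of N] p by (intro powr_mono2) auto
  also have "\<dots> < c * real N"
    using N assms(1) by (simp add: field_simps)
  finally show False
    by simp
qed

lemma bilinear_estimate_imp_nonneg_regularity:
  assumes est: "\<forall>u v. test_fun u \<longrightarrow> test_fun v \<longrightarrow>
      Xper_norm k b (\<lambda>p. u p * v p) \<le> ennreal C * Xper_norm k b1 u * HH_norm b2 s v"
  shows "s \<ge> 0"
proof -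
  define G0 G1 G2 where "G0 = gauss_moment (2 * b) 0 1" and "G1 = gauss_moment (2 * b1) 0 (1 / 2)"
    and "G2 = gauss_moment (2 * b2) 0 (1 / 2)"
  have G: "G0 > 0" "G1 > 0" "G2 > 0"
    by (simp_all add: G0_def G1_def G2_def gauss_moment_pos)
  define K where "K = 16 * pi ^ 3 * (max 0 C)\<^sup>2 * G1 * G2"
  have "(1 + 2 * real N) powr (- 2 * s) \<le> K / G0" for N :: nat
  proof -
    define J where "J = jbr (real N) powr (2 * k)"
    define x where "x = (1 + 2 * real N) powr (2 * s)"
    have J: "J > 0" and x: "x > 0"
      using jbr_pos[of "real N"] by (simp_all add: J_def x_def)
    have "4 * pi ^ 3 / (1 / 2 + 1 / 2) * jbr (real_of_int (int N + - 2 * int N)) powr (2 * k) *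
        gauss_moment (2 * b) (- (real N)\<^sup>2 + 0 + (real_of_int (int N + - 2 * int N))\<^sup>2) (1 / 2 + 1 / 2)
      \<le> (max 0 C)\<^sup>2 * (4 * pi ^ 3 / (1 / 2) * jbr (real_of_int (int N)) powr (2 * k) *
        gauss_moment (2 * b1) (- (real N)\<^sup>2 + (real_of_int (int N))\<^sup>2) (1 / 2)) *
        (4 * pi ^ 3 / (1 / 2) * jbr (real_of_int (- 2 * int N)) powr (2 * s) * gauss_moment (2 * b2) 0 (1 / 2))"
      by (rule bilinear_estimate_on_wave_packets[OF est]) simp_all
    then have "4 * pi ^ 3 * J * G0 \<le> (max 0 C)\<^sup>2 * (8 * pi ^ 3 * J * G1) * (8 * pi ^ 3 * x * G2)"
      by (simp add: J_def x_def G0_def G1_def G2_def jbr_def)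
    then have "(4 * pi ^ 3 * J) * G0 \<le> (4 * pi ^ 3 * J) * (K * x)"
      by (simp add: K_def power3_eq_cube mult_ac)
    then have "G0 \<le> K * x"
      using J by simp
    then show ?thesis
      using G x by (simp add: x_def powr_minus field_simps)
  qed
  then have "- 2 * s \<le> 0"
    by (intro powr_bounded_imp_nonpos[of 2]) auto
  then show ?thesis
    by simp
qed

lemma bilinear_estimate_imp_regularity_gap:
  assumes est: "\<forall>u v. test_fun u \<longrightarrow> test_fun v \<longrightarrow>
      Xper_norm k b (\<lambda>p. u p * v p) \<le> ennreal C * Xper_norm k b1 u * HH_norm b2 s v"
  shows "k + 2 * b \<le> s"
proof -
  define G0 G1 G2 where "G0 = gauss_moment (- \<bar>2 * b\<bar>) 0 1" and "G1 = gauss_moment (2 * b1) 0 (1 / 2)"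
    and "G2 = gauss_moment (2 * b2) 0 (1 / 2)"
  have G: "G0 > 0" "G1 > 0" "G2 > 0"
    by (simp_all add: G0_def G1_def G2_def gauss_moment_pos)
  define P where "P = 4 * pi ^ 3 * 2 powr (- \<bar>2 * b\<bar>) * G0"
  define Q where "Q = (max 0 C)\<^sup>2 * (8 * pi ^ 3 * G1) * (8 * pi ^ 3 * G2)"
  have P: "P > 0"
    using G by (simp add: P_def)
  have "(1 + 1 * real N) powr (2 * k + 4 * b - 2 * s) \<le> Q / P" for N :: nat
  proof -
    define y where "y = jbr (real N)"
    have y: "y > 0"
      using jbr_pos[of "real N"] by (simp add: y_def)
    have "4 * pi ^ 3 / (1 / 2 + 1 / 2) * jbr (real_of_int (0 + int N)) powr (2 * k) *
        gauss_moment (2 * b) (0 + 0 + (real_of_int (0 + int N))\<^sup>2) (1 / 2 + 1 / 2)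
      \<le> (max 0 C)\<^sup>2 * (4 * pi ^ 3 / (1 / 2) * jbr (real_of_int 0) powr (2 * k) *
        gauss_moment (2 * b1) (0 + (real_of_int 0)\<^sup>2) (1 / 2)) *
        (4 * pi ^ 3 / (1 / 2) * jbr (real_of_int (int N)) powr (2 * s) * gauss_moment (2 * b2) 0 (1 / 2))"
      by (rule bilinear_estimate_on_wave_packets[OF est]) simp_all
    then have upper: "4 * pi ^ 3 * y powr (2 * k) * gauss_moment (2 * b) ((real N)\<^sup>2) 1 \<le> Q * y powr (2 * s)"
      by (simp add: y_def G1_def G2_def Q_def jbr_def mult_ac)
    have "2 powr (- \<bar>2 * b\<bar>) * y powr (4 * b) * G0 \<le> jbr ((real N)\<^sup>2) powr (2 * b) * G0"
      using jbr_square_powr_ge[of "2 * b" "real N"] G by (simp add: y_def)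
    also have "\<dots> \<le> gauss_moment (2 * b) ((real N)\<^sup>2) 1"
      using gauss_moment_ge[of 1 "(real N)\<^sup>2" "2 * b"] by (simp add: G0_def)
    finally have lower: "2 powr (- \<bar>2 * b\<bar>) * y powr (4 * b) * G0 \<le> gauss_moment (2 * b) ((real N)\<^sup>2) 1" .
    have "P * y powr (2 * k + 4 * b - 2 * s) * y powr (2 * s) =
        4 * pi ^ 3 * y powr (2 * k) * (2 powr (- \<bar>2 * b\<bar>) * y powr (4 * b) * G0)"
      by (simp add: P_def powr_add[symmetric] mult_ac)
    also have "\<dots> \<le> 4 * pi ^ 3 * y powr (2 * k) * gauss_moment (2 * b) ((real N)\<^sup>2) 1"
      using lower by (rule mult_left_mono) simp
    also note upper
    finally have "P * y powr (2 * k + 4 * b - 2 * s) \<le> Q"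
      using y by simp
    then show ?thesis
      using P by (simp add: y_def jbr_def pos_le_divide_eq mult.commute)
  qed
  then have "2 * k + 4 * b - 2 * s \<le> 0"
    by (intro powr_bounded_imp_nonpos[of 1]) auto
  then show ?thesis
    by simp
qed

theorem proposition4p3:
  fixes k s b1 b2 \<eta> :: real
  assumes "\<eta> > 0"
    and "\<exists>C::real. \<forall>u v. test_fun u \<longrightarrow> test_fun v \<longrightarrow>
           Xper_norm k (-1/2 + \<eta>) (\<lambda>p. u p * v p)
             \<le> ennreal C * Xper_norm k b1 u * HH_norm b2 s v"
  shows "s \<ge> 0 \<and> k < s + 1"
proof -
  obtain C :: real where est: "\<forall>u v. test_fun u \<longrightarrow> test_fun v \<longrightarrow>
      Xper_norm k (-1/2 + \<eta>) (\<lambda>p. u p * v p) \<le> ennreal C * Xper_norm k b1 u * HH_norm b2 s v"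
    using assms(2) by blast
  have "s \<ge> 0"
    using bilinear_estimate_imp_nonneg_regularity[OF est] .
  moreover have "k + 2 * (-1/2 + \<eta>) \<le> s"
    using bilinear_estimate_imp_regularity_gap[OF est] .
  ultimately show ?thesis
    using assms(1) by simp
qed

end
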